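(* All points $\mathbf{p}_\sigma^{(\delta)}$, for $\sigma\in\{-1,1\}^d$ with $\sigma_{d-1}=\sigma_d=1$ and $\delta=1/L>0$ sufficiently small, are pairwise distinct, and so are all the points $\mathbf{q}_\sigma$.
   Context: Fix $\epsilon,\gamma$ with $0<4\gamma<\epsilon<\frac12$. The Goldfarb cube $\mathrm{Gol}_d\subseteq\mathbb{R}^d$ is the set of $\mathbf{x}$ with $-z_1\le x_1\le z_1:=1$, $-z_2\le x_2\le z_2:=1-\epsilon-\epsilon x_1$, $-z_k\le x_k\le z_k:=1-\epsilon+\epsilon\gamma-\epsilon(x_{k-1}-\gamma x_{k-2})$ ($3\le k\le d$); its vertices are $\mathbf{v}_\sigma$, $\sigma\in\{-1,1\}^d$ (the vertex where, for each $k$, the upper inequality is tight if $\sigma_k=1$ and the lower one if $\sigma_k=-1$), with $\mathrm{sign}(v_{\sigma,k})=\sigma_k$. The dual Goldfarb cube is $\mathrm{Gol}^{\triangle}_d=\bigcap_{\tau}\{\mathbf{x}:\mathbf{v}_\tau^T\mathbf{x}\le1\}$. Let $\mathcal{S}:=\{\mathbf{x}\in\mathbb{R}^d: x_1=\ldots=x_{d-2}=0\}$. For $\mathbf{x}$ and $L\ge0$, $\mathbf{x}(L):=(Lx_1,\ldots,Lx_{d-2},x_{d-1},x_d)$, $\mathcal{P}(L):=\{\mathbf{x}(L):\mathbf{x}\in\mathcal{P}\}$; with $\delta=1/L$, $\mathrm{Gol}^{\triangle}_d(L)=\bigcap_\tau\{\mathbf{x}:\mathbf{v}_\tau(\delta)^T\mathbf{x}\le1\}$.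 For each $\sigma$ there is $\mathbf{p}_\sigma\in\mathcal{S}\cap\mathrm{Gol}^{\triangle}_d$ with $\mathbf{p}_\sigma^T\mathbf{v}_\sigma=1$, $\mathbf{p}_\sigma^T\mathbf{v}_\tau<1$ ($\tau\ne\sigma$). Let $\mathcal{L}:=\{(0,\ldots,0,2,y)^T:y\in\mathbb{R}\}$. Define $\mathbf{q}_\sigma:=\mathbf{p}_\sigma-C\,\mathbf{v}_\sigma(0)/\|\mathbf{v}_\sigma(0)\|^2$ with $C<0$ chosen so that $q_{\sigma,d-1}=2$, and $\mathbf{p}_\sigma^{(\delta)}:=C\,\mathbf{v}_\sigma(\delta)/\|\mathbf{v}_\sigma(\delta)\|^2+\mathbf{q}_\sigma$ (projection of $\mathbf{q}_\sigma$ onto $\mathbf{v}_\sigma(\delta)^T\mathbf{x}=1$). Known result used: for $\sigma_{d-1}=\sigma_d=1$ and $\delta$ small, (i) $\mathbf{v}_\sigma(\delta)^T\mathbf{p}_\sigma^{(\delta)}=1$ and $\mathbf{v}_\tau(\delta)^T\mathbf{p}_\sigma^{(\delta)}<1$ for $\tau\ne\sigma$; (ii) $(\mathbf{p}_\sigma^{(\delta)},\mathbf{q}_\sigma)$ is the unique pair minimizing $\|\mathbf{x}-\mathbf{x}'\|$ over $\mathbf{x}\in\mathrm{Gol}^{\triangle}_d(L)$, $\mathbf{x}'\in\mathcal{L}$, $x'_d\ge q_{\sigma,d}$. *)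

theory Defs
  imports Complex_Main
begin

text \<open>Vectors of R^d are represented as functions nat => real, coordinates indexed 1..d.\<close>

definition sign_vectors :: "nat \<Rightarrow> (nat \<Rightarrow> real) set" where
  "sign_vectors d = {s. (\<forall>k\<in>{1..d}. s k \<in> {-1, 1}) \<and> (\<forall>k. k \<notin> {1..d} \<longrightarrow> s k = 0)}"

text \<open>Vertex v_sigma of the Goldfarb cube: coordinate k equals sigma_k * z_k(v).\<close>
fun gol_vtx :: "real \<Rightarrow> real \<Rightarrow> (nat \<Rightarrow> real) \<Rightarrow> nat \<Rightarrow> real" where
  "gol_vtx e g s 0 = 0"
| "gol_vtx e g s (Suc 0) = s 1 * 1"
| "gol_vtx e g s (Suc (Suc 0)) = s 2 * (1 - e - e * gol_vtx e g s 1)"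
| "gol_vtx e g s (Suc (Suc (Suc k))) =
     s (k + 3) * (1 - e + e * g - e * (gol_vtx e g s (k + 2) - g * gol_vtx e g s (k + 1)))"

definition ip :: "nat \<Rightarrow> (nat \<Rightarrow> real) \<Rightarrow> (nat \<Rightarrow> real) \<Rightarrow> real" where
  "ip d x y = (\<Sum>k=1..d. x k * y k)"

definition dual_gol :: "nat \<Rightarrow> real \<Rightarrow> real \<Rightarrow> (nat \<Rightarrow> real) set" where
  "dual_gol d e g = {x. \<forall>t\<in>sign_vectors d. ip d (gol_vtx e g t) x \<le> 1}"

definition subS :: "nat \<Rightarrow> (nat \<Rightarrow> real) set" where
  "subS d = {x. \<forall>k\<in>{1..d-2}. x k = 0}"

text \<open>x(L) with delta = 1/L: first d-2 coordinates scaled by delta.\<close>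
definition scl :: "nat \<Rightarrow> real \<Rightarrow> (nat \<Rightarrow> real) \<Rightarrow> nat \<Rightarrow> real" where
  "scl d \<delta> x k = (if 1 \<le> k \<and> k \<le> d - 2 then \<delta> * x k else x k)"

text \<open>C_sigma, chosen so that the (d-1)-th coordinate of q_sigma equals 2.\<close>
definition Cconst :: "nat \<Rightarrow> real \<Rightarrow> real \<Rightarrow> (nat \<Rightarrow> real) \<Rightarrow> (nat \<Rightarrow> real) \<Rightarrow> real" where
  "Cconst d e g p s = (let v0 = scl d 0 (gol_vtx e g s) in
     (p (d - 1) - 2) * ip d v0 v0 / v0 (d - 1))"

definition qpt :: "nat \<Rightarrow> real \<Rightarrow> real \<Rightarrow> (nat \<Rightarrow> real) \<Rightarrow> (nat \<Rightarrow> real) \<Rightarrow> nat \<Rightarrow> real" where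
  "qpt d e g p s k = (let v0 = scl d 0 (gol_vtx e g s) in
     p k - Cconst d e g p s * v0 k / ip d v0 v0)"

definition pdelta :: "nat \<Rightarrow> real \<Rightarrow> real \<Rightarrow> real \<Rightarrow> (nat \<Rightarrow> real) \<Rightarrow> (nat \<Rightarrow> real) \<Rightarrow> nat \<Rightarrow> real" where
  "pdelta d e g \<delta> p s k = (let vd = scl d \<delta> (gol_vtx e g s) in
     Cconst d e g p s * vd k / ip d vd vd + qpt d e g p s k)"

end

theory Submission
  imports Defs "HOL-Analysis.Convex"
begin

text \<open>Writing \<open>v_\<sigma>,k = \<sigma>_k z_k\<close>, an induction along the recursion for \<open>z_k\<close> gives
  \<open>z_k \<ge> 1 - 2\<epsilon> > 0\<close>, so \<open>v_\<sigma>,d-1 > 0\<close> whenever \<open>\<sigma>_d-1 = 1\<close>.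

  The points \<open>q_\<sigma> = p_\<sigma> + s_\<sigma> v_\<sigma>(0)\<close> are translates along the facet normals, with \<open>s_\<sigma> > 0\<close>
  because \<open>p_\<sigma>,d-1 \<le> 1 < 2\<close>. If \<open>q_\<sigma> = q_\<tau>\<close>, pairing with \<open>v_\<sigma>(0)\<close> and \<open>v_\<tau>(0)\<close> and using that
  \<open>p_\<sigma>\<close> is tight only at \<open>v_\<sigma>\<close> gives \<open>s_\<sigma> |v_\<sigma>|\<^sup>2 < s_\<tau> \<langle>v_\<sigma>, v_\<tau>\<rangle>\<close> and
  \<open>s_\<tau> |v_\<tau>|\<^sup>2 < s_\<sigma> \<langle>v_\<sigma>, v_\<tau>\<rangle>\<close>, contradicting Cauchy-Schwarz.

  For the points \<open>p_\<sigma>(\<delta>)\<close>: \<open>v_\<tau>(\<delta>) \<bullet> p_\<tau>(\<delta>) = 1\<close> for every \<open>\<delta>\<close>, while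
  \<open>v_\<tau>(\<delta>) \<bullet> p_\<sigma>(\<delta>)\<close> is continuous in \<open>\<delta>\<close> with value \<open>v_\<tau> \<bullet> p_\<sigma> < 1\<close> at \<open>\<delta> = 0\<close>;
  there are only finitely many pairs \<open>(\<sigma>, \<tau>)\<close>, so one \<open>\<delta>\<^sub>0\<close> works for all of them.\<close>

text \<open>\<open>gol_radius e g s k\<close> is the right-hand side \<open>z_k\<close> of the \<open>k\<close>-th defining inequality,
  evaluated at the vertex \<open>v_s\<close>.\<close>

fun gol_radius :: "real \<Rightarrow> real \<Rightarrow> (nat \<Rightarrow> real) \<Rightarrow> nat \<Rightarrow> real" where
  "gol_radius e g s 0 = 0"
| "gol_radius e g s (Suc 0) = 1"
| "gol_radius e g s (Suc (Suc 0)) = 1 - e - e * gol_vtx e g s 1"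
| "gol_radius e g s (Suc (Suc (Suc k))) =
     1 - e + e * g - e * (gol_vtx e g s (k + 2) - g * gol_vtx e g s (k + 1))"

lemma gol_vtx_eq_sign_mult_radius: "gol_vtx e g s k = s k * gol_radius e g s k"
  by (induction e g s k rule: gol_vtx.induct) (simp_all add: numeral_eq_Suc)

lemma gol_radius_2: "gol_radius e g s 2 = 1 - e - e * s 1"
  by (simp add: numeral_eq_Suc)

lemma gol_radius_Suc:
  assumes "2 \<le> n"
  shows "gol_radius e g s (Suc n) = 1 - e + e * g - e * (gol_vtx e g s n - g * gol_vtx e g s (n - 1))"
proof -
  obtain m where "n = Suc (Suc m)" using assms by (metis add_2_eq_Suc le_Suc_ex)
  then show ?thesis by simp
qed

lemma gol_vtx_cong: "(\<And>j. j \<le> k \<Longrightarrow> s j = s' j) \<Longrightarrow> gol_vtx e g s k = gol_vtx e g s' k"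
proof (induction e g s k rule: gol_vtx.induct)
  case (4 e g s k)
  then show ?case by (simp add: numeral_eq_Suc)
qed (auto simp: numeral_eq_Suc)

lemma gol_radius_cong:
  assumes "\<And>j. j < k \<Longrightarrow> s j = s' j"
  shows "gol_radius e g s k = gol_radius e g s' k"
proof -
  have "gol_vtx e g s j = gol_vtx e g s' j" if "j < k" for j
    using assms that by (intro gol_vtx_cong) auto
  then show ?thesis by (cases "(e, g, s, k)" rule: gol_radius.cases) (auto simp del: gol_vtx.simps)
qed

text \<open>The bound \<open>|x| \<le> 1\<close> alone is not inductive; the extra inequality
  \<open>z_k + 2 g x_k-1 \<le> 1 - 2 g\<close> is what keeps \<open>z_k+1 \<ge> 1 - 2 e\<close>.\<close>

lemma gol_radius_step:
  fixes e g z b s :: real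
  assumes e: "0 < e" "e < 1/2" and g: "0 < g" "4 * g < e"
    and z: "1 - 2*e \<le> z" "z \<le> 1" and b: "\<bar>b\<bar> \<le> 1" and zb: "z + 2*g*b \<le> 1 - 2*g"
    and s: "s = 1 \<or> s = -1"
  defines "z' \<equiv> 1 - e + e*g - e * (s*z - g*b)"
  shows "1 - 2*e \<le> z' \<and> z' \<le> 1 \<and> z' + 2*g*(s*z) \<le> 1 - 2*g"
  using s
proof
  assume s1: "s = 1"
  have "e*(1 - e) - g*(2 - e) \<ge> 0"
  proof -
    have "4*g*(2 - e) \<le> e*(2 - e)" using e g by (intro mult_right_mono) auto
    also have "\<dots> \<le> 4*(e*(1 - e))" using e by (simp add: algebra_simps)
    finally show ?thesis by simp
  qed
  moreover have "z' - (1 - 2*e) = e*(1 - z) + e*g*(1 + b)"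
    "1 - z' = e*(z - (1 - 2*e)) + e*g*(1 - b) + 2*(e*(1 - e - g))"
    "(1 - 2*g) - (z' + 2*g*(s*z)) = (e - 2*g)*(z - (1 - 2*e)) + e*g*(1 - b) + 2*(e*(1 - e) - g*(2 - e))"
    unfolding z'_def s1 by (simp_all add: algebra_simps)
  moreover have "0 \<le> e*(1 - z)" "0 \<le> e*g*(1 + b)" "0 \<le> e*(z - (1 - 2*e))" "0 \<le> e*g*(1 - b)"
    "0 \<le> e*(1 - e - g)" "0 \<le> (e - 2*g)*(z - (1 - 2*e))"
    using e g z b by (auto simp: abs_le_iff)
  ultimately show ?thesis by (smt (verit))
next
  assume s1: "s = -1"
  have "z' - (1 - 2*e) = e*(1 + z) + e*g*(1 + b)"
    "1 - z' = e*(1 - 2*g - 2*g*b - z) + e*g*(1 + b)"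
    "(1 - 2*g) - (z' + 2*g*(s*z)) = (e - 2*g)*(1 - 2*g - 2*g*b - z) + (1 + b)*(g*(e - 4*g))"
    unfolding z'_def s1 by (simp_all add: algebra_simps)
  moreover have "0 \<le> e*(1 + z)" "0 \<le> e*g*(1 + b)" "0 \<le> e*(1 - 2*g - 2*g*b - z)"
    "0 \<le> (e - 2*g)*(1 - 2*g - 2*g*b - z)" "0 \<le> (1 + b)*(g*(e - 4*g))"
    using e g z b zb by (auto simp: abs_le_iff)
  ultimately show ?thesis by (smt (verit))
qed

lemma gol_radius_bounds:
  assumes e: "0 < e" "e < 1/2" and g: "0 < g" "4 * g < e"
    and s: "s \<in> sign_vectors d" and k: "2 \<le> k" "k \<le> d"
  shows "1 - 2*e \<le> gol_radius e g s k \<and> gol_radius e g s k \<le> 1 \<and>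
    \<bar>gol_vtx e g s (k - 1)\<bar> \<le> 1 \<and> gol_radius e g s k + 2*g*gol_vtx e g s (k - 1) \<le> 1 - 2*g"
  using k(1)
proof (induction k rule: dec_induct)
  case base
  have "s 1 = 1 \<or> s 1 = -1" using s k by (auto simp: sign_vectors_def)
  \<comment> \<open>the case \<open>k = 2\<close> is the recursion step with \<open>x_0 = -1\<close> and \<open>z_1 = 1\<close>\<close>
  from gol_radius_step[OF e g _ _ _ _ this, of 1 "-1"] this show ?case
    using e g by (auto simp: gol_radius_2 algebra_simps)
next
  case (step n)
  let ?z = "gol_radius e g s n"
  have "s n = 1 \<or> s n = -1" using s step.hyps k by (auto simp: sign_vectors_def)
  moreover have "1 - 2*e \<le> ?z" "?z \<le> 1" "\<bar>gol_vtx e g s (n - 1)\<bar> \<le> 1"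
    "?z + 2*g*gol_vtx e g s (n - 1) \<le> 1 - 2*g"
    using step.IH by auto
  ultimately have "\<bar>gol_vtx e g s n\<bar> \<le> 1"
    using e by (auto simp: gol_vtx_eq_sign_mult_radius)
  with gol_radius_step[OF e g \<open>1 - 2*e \<le> ?z\<close> \<open>?z \<le> 1\<close> \<open>\<bar>gol_vtx e g s (n - 1)\<bar> \<le> 1\<close>
      \<open>?z + 2*g*gol_vtx e g s (n - 1) \<le> 1 - 2*g\<close> \<open>s n = 1 \<or> s n = -1\<close>]
  show ?case
    using step.hyps by (simp add: gol_radius_Suc gol_vtx_eq_sign_mult_radius)
qed

lemma gol_vtx_pos:
  assumes e: "0 < e" "e < 1/2" and g: "0 < g" "4 * g < e"
    and s: "s \<in> sign_vectors d" and k: "1 \<le> k" "k \<le> d" and "s k = 1"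
  shows "0 < gol_vtx e g s k"
proof (cases "k = 1")
  case False
  then have "1 - 2*e \<le> gol_radius e g s k"
    using gol_radius_bounds[OF e g s _ k(2)] k(1) by simp
  then show ?thesis using e \<open>s k = 1\<close> by (simp add: gol_vtx_eq_sign_mult_radius)
qed (use \<open>s k = 1\<close> in simp)

lemma gol_radius_minus_prefix:
  assumes "\<And>j. 1 \<le> j \<Longrightarrow> j \<le> m \<Longrightarrow> s j = -1"
  shows "gol_radius e g s (Suc m) = 1"
proof -
  have "(\<forall>j. 1 \<le> j \<and> j \<le> m \<longrightarrow> gol_vtx e g s j = -1) \<and> gol_radius e g s (Suc m) = 1"
    using assms
  proof (induction m)
    case (Suc m)
    then have IH: "\<forall>j. 1 \<le> j \<and> j \<le> m \<longrightarrow> gol_vtx e g s j = -1" "gol_radius e g s (Suc m) = 1"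
      by auto
    have last: "gol_vtx e g s (Suc m) = -1"
      using IH(2) Suc.prems by (simp add: gol_vtx_eq_sign_mult_radius)
    have "gol_radius e g s (Suc (Suc m)) = 1"
    proof (cases m)
      case (Suc m')
      then show ?thesis using last IH(1) by (simp add: algebra_simps)
    qed (use last in simp)
    with IH(1) last show ?case using le_Suc_eq by blast
  qed simp
  then show ?thesis ..
qed

lemma finite_sign_vectors: "finite (sign_vectors d)"
  by (rule finite_subset[OF _ finite_set_of_finite_funs[of "{1..d}" "{-1, 1}" 0]])
    (auto simp: sign_vectors_def)

lemma ip_commute: "ip d x y = ip d y x"
  unfolding ip_def by (simp add: mult.commute)

lemma ip_add_scaled_right: "ip d a (\<lambda>k. x k + c * y k) = ip d a x + c * ip d a y"
  unfolding ip_def by (simp add: sum.distrib sum_distrib_left algebra_simps)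

lemma ip_subS:
  assumes "2 \<le> d" "x \<in> subS d"
  shows "ip d x y = x (d - 1) * y (d - 1) + x d * y d"
proof -
  have "{1..d} = {1..d - 2} \<union> {d - 1, d}" using assms(1) by auto
  then have "ip d x y = (\<Sum>k\<in>{1..d - 2}. x k * y k) + (\<Sum>k\<in>{d - 1, d}. x k * y k)"
    unfolding ip_def by (simp only:) (rule sum.union_disjoint, auto)
  then show ?thesis using assms by (simp add: subS_def)
qed

lemma scl_last_coords:
  assumes "2 \<le> d"
  shows "scl d \<delta> x (d - 1) = x (d - 1)" "scl d \<delta> x d = x d"
proof -
  have "\<not> d - 1 \<le> d - 2" "\<not> d \<le> d - 2" using assms by arith+
  then show "scl d \<delta> x (d - 1) = x (d - 1)" "scl d \<delta> x d = x d" by (simp_all add: scl_def)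
qed

lemma scl_0_in_subS: "scl d 0 x \<in> subS d"
  by (simp add: scl_def subS_def)

lemma ip_scl_subS:
  assumes "2 \<le> d" "p \<in> subS d"
  shows "ip d (scl d \<delta> x) p = ip d x p"
  using ip_subS[OF assms, of "scl d \<delta> x"] ip_subS[OF assms, of x] scl_last_coords[OF assms(1)]
  by (simp add: ip_commute[of d _ p])

lemma ip_scl_self_pos:
  assumes "2 \<le> d" "x (d - 1) \<noteq> 0"
  shows "0 < ip d (scl d \<delta> x) (scl d \<delta> x)"
proof -
  have "0 < scl d \<delta> x (d - 1) * scl d \<delta> x (d - 1)"
    using assms scl_last_coords(1)[OF assms(1)] by (auto simp: zero_less_mult_iff linorder_neq_iff)
  also have "\<dots> \<le> ip d (scl d \<delta> x) (scl d \<delta> x)"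
    unfolding ip_def by (rule member_le_sum) (use assms(1) in auto)
  finally show ?thesis .
qed

lemma subS_dual_gol_le_1:
  assumes d: "2 \<le> d" and x: "x \<in> subS d \<inter> dual_gol d e g"
  shows "x (d - 1) \<le> 1"
proof -
  \<comment> \<open>the vertices with signs \<open>(-1, \<dots>, -1, 1, \<plusminus>1)\<close> have \<open>(d-1)\<close>-th coordinate \<open>1\<close>
    and opposite last coordinates\<close>
  define t :: "real \<Rightarrow> nat \<Rightarrow> real" where
    "t c k = (if 1 \<le> k \<and> k \<le> d - 2 then -1 else if k = d - 1 then 1 else if k = d then c else 0)" for c k
  have t: "t 1 \<in> sign_vectors d" "t (-1) \<in> sign_vectors d"
    using d by (auto simp: t_def sign_vectors_def)
  have t_last: "t c (d - 1) = 1" "t c d = c" for c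
    using d by (auto simp: t_def)
  have "Suc (d - 2) = d - 1" using d by arith
  then have "gol_radius e g (t c) (d - 1) = 1" for c
    using gol_radius_minus_prefix[of "d - 2" "t c" e g] by (simp add: t_def)
  then have "gol_vtx e g (t c) (d - 1) = 1" for c
    using t_last by (simp add: gol_vtx_eq_sign_mult_radius)
  moreover have "gol_radius e g (t c) d = gol_radius e g (t 1) d" for c
    by (rule gol_radius_cong) (simp add: t_def)
  then have "gol_vtx e g (t c) d = c * gol_radius e g (t 1) d" for c
    using t_last by (simp add: gol_vtx_eq_sign_mult_radius)
  ultimately have ip_t: "ip d x (gol_vtx e g (t c)) = x (d - 1) + c * (x d * gol_radius e g (t 1) d)" for c
    using ip_subS[OF d, of x] x by simp
  have "ip d x (gol_vtx e g (t c)) \<le> 1" if "t c \<in> sign_vectors d" for c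
    using x that by (auto simp: dual_gol_def ip_commute)
  from this[OF t(1)] this[OF t(2)] show ?thesis
    unfolding ip_t by linarith
qed

lemma translates_along_normals_differ:
  assumes "ip d a p = 1" "ip d b p < 1" "ip d a r < 1" "ip d b r = 1" "0 < s" "0 < t"
  shows "\<exists>k\<in>{1..d}. p k + s * a k \<noteq> r k + t * b k"
proof (rule ccontr)
  assume "\<not> ?thesis"
  then have "ip d c (\<lambda>k. p k + s * a k) = ip d c (\<lambda>k. r k + t * b k)" for c
    unfolding ip_def by (intro sum.cong) auto
  then have "ip d a p + s * ip d a a = ip d a r + t * ip d a b"
    "ip d b p + s * ip d b a = ip d b r + t * ip d b b"
    by (simp_all add: ip_add_scaled_right)
  then have lt: "s * ip d a a < t * ip d a b" "t * ip d b b < s * ip d a b"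
    using assms(1-4) by (simp_all add: ip_commute[of d b a])
  have "0 \<le> ip d a a" "0 \<le> ip d b b"
    unfolding ip_def by (simp_all add: sum_nonneg)
  then have "(s * ip d a a) * (t * ip d b b) < (t * ip d a b) * (s * ip d a b)"
    using lt assms(5,6) by (intro mult_strict_mono'[OF lt]) simp_all
  then have "ip d a a * ip d b b < (ip d a b)\<^sup>2"
    using assms(5,6) by (simp add: power2_eq_square algebra_simps)
  moreover have "(ip d a b)\<^sup>2 \<le> ip d a a * ip d b b"
    using Cauchy_Schwarz_ineq_sum[of a b "{1..d}"] by (simp add: ip_def power2_eq_square)
  ultimately show False by simp
qed

lemma qpt_eq_translate:
  assumes d: "2 \<le> d" and v: "gol_vtx e g s (d - 1) \<noteq> 0"
  shows "qpt d e g p s k =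
    p k + (2 - p (d - 1)) / gol_vtx e g s (d - 1) * scl d 0 (gol_vtx e g s) k"
  using ip_scl_self_pos[where x = "gol_vtx e g s", OF d v, of 0] v scl_last_coords[OF d]
  by (simp add: qpt_def Cconst_def Let_def field_simps)

lemma pdelta_0: "pdelta d e g 0 p s = p"
  by (rule ext) (simp add: pdelta_def qpt_def Let_def)

lemma ip_scl_pdelta:
  assumes d: "2 \<le> d" and v: "gol_vtx e g s (d - 1) \<noteq> 0" and p: "p \<in> subS d"
  shows "ip d (scl d \<delta> (gol_vtx e g s)) (pdelta d e g \<delta> p s) = ip d (gol_vtx e g s) p"
proof -
  define vd where "vd = scl d \<delta> (gol_vtx e g s)"
  define v0 where "v0 = scl d 0 (gol_vtx e g s)"
  define C where "C = Cconst d e g p s"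
  have "pdelta d e g \<delta> p s = (\<lambda>k. C * vd k / ip d vd vd + (p k - C * v0 k / ip d v0 v0))"
    by (auto simp: pdelta_def qpt_def Let_def C_def vd_def v0_def)
  then have "ip d vd (pdelta d e g \<delta> p s) = C / ip d vd vd * ip d vd vd + ip d vd p - C / ip d v0 v0 * ip d vd v0"
    by (simp add: ip_def sum.distrib sum_subtractf sum_distrib_left sum_divide_distrib algebra_simps)
  also have "ip d vd v0 = ip d v0 v0"
    using ip_scl_subS[OF d scl_0_in_subS] by (simp add: vd_def v0_def)
  also have "ip d vd p = ip d (gol_vtx e g s) p"
    using ip_scl_subS[OF d p] by (simp add: vd_def)
  moreover have "ip d vd vd \<noteq> 0" "ip d v0 v0 \<noteq> 0"
    using ip_scl_self_pos[where x = "gol_vtx e g s", OF d v] unfolding vd_def v0_def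
    by (metis less_irrefl)+
  ultimately show ?thesis by (simp add: vd_def)
qed

lemma isCont_ip_scl_pdelta:
  assumes d: "2 \<le> d" and v: "gol_vtx e g s (d - 1) \<noteq> 0"
  shows "isCont (\<lambda>\<delta>. ip d (scl d \<delta> w) (pdelta d e g \<delta> p s)) 0"
proof -
  have isCont_scl: "isCont (\<lambda>\<delta>. scl d \<delta> x k) 0" for x k
  proof (cases "1 \<le> k \<and> k \<le> d - 2")
    case False
    show ?thesis unfolding scl_def if_not_P[OF False] by simp
  qed (simp add: scl_def)
  have "(\<Sum>k = 1..d. scl d 0 (gol_vtx e g s) k * scl d 0 (gol_vtx e g s) k) \<noteq> 0"
    using ip_scl_self_pos[where x = "gol_vtx e g s", OF d v, of 0] by (simp add: ip_def)
  then show ?thesis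
    unfolding ip_def pdelta_def Let_def by (intro continuous_intros isCont_scl)
qed

lemma qpt_ne:
  assumes d: "2 \<le> d"
    and v: "0 < gol_vtx e g \<sigma> (d - 1)" "0 < gol_vtx e g \<tau> (d - 1)"
    and p: "p \<in> subS d \<inter> dual_gol d e g" "ip d p (gol_vtx e g \<sigma>) = 1" "ip d p (gol_vtx e g \<tau>) < 1"
    and r: "r \<in> subS d \<inter> dual_gol d e g" "ip d r (gol_vtx e g \<tau>) = 1" "ip d r (gol_vtx e g \<sigma>) < 1"
  shows "\<exists>k\<in>{1..d}. qpt d e g p \<sigma> k \<noteq> qpt d e g r \<tau> k"
proof -
  have ip_scl_0: "ip d (scl d 0 (gol_vtx e g s)) x = ip d x (gol_vtx e g s)" if "x \<in> subS d" for s x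
    using ip_scl_subS[OF d that] by (simp add: ip_commute)
  have "p (d - 1) \<le> 1" "r (d - 1) \<le> 1"
    using subS_dual_gol_le_1[OF d] p(1) r(1) by blast+
  then have "0 < (2 - p (d - 1)) / gol_vtx e g \<sigma> (d - 1)" "0 < (2 - r (d - 1)) / gol_vtx e g \<tau> (d - 1)"
    using v by simp_all
  from translates_along_normals_differ[OF _ _ _ _ this] p r
  show ?thesis
    using v by (simp add: ip_scl_0 qpt_eq_translate[OF d])
qed

lemma eventually_pdelta_ne:
  assumes d: "2 \<le> d" and v: "gol_vtx e g \<sigma> (d - 1) \<noteq> 0" "gol_vtx e g \<tau> (d - 1) \<noteq> 0"
    and p: "p \<in> subS d" "ip d p (gol_vtx e g \<tau>) < 1"
    and r: "r \<in> subS d" "ip d r (gol_vtx e g \<tau>) = 1"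
  shows "eventually (\<lambda>\<delta>. \<exists>k\<in>{1..d}. pdelta d e g \<delta> p \<sigma> k \<noteq> pdelta d e g \<delta> r \<tau> k) (at_right 0)"
proof -
  define F where "F \<delta> = ip d (scl d \<delta> (gol_vtx e g \<tau>)) (pdelta d e g \<delta> p \<sigma>)" for \<delta>
  have "F 0 < 1"
    using ip_scl_subS[OF d p(1)] p(2) by (simp add: F_def pdelta_0 ip_commute)
  moreover have "(F \<longlongrightarrow> F 0) (at 0)"
    using isCont_ip_scl_pdelta[OF d v(1)] unfolding F_def[abs_def] isCont_def .
  ultimately have "eventually (\<lambda>\<delta>. F \<delta> < 1) (at 0)"
    by (simp add: order_tendstoD(2))
  then have "eventually (\<lambda>\<delta>. F \<delta> < 1) (at_right 0)"
    by (simp add: eventually_at_split)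
  then show ?thesis
  proof (rule eventually_mono)
    fix \<delta> assume F: "F \<delta> < 1"
    have "ip d (scl d \<delta> (gol_vtx e g \<tau>)) (pdelta d e g \<delta> r \<tau>) = 1"
      using ip_scl_pdelta[OF d v(2) r(1)] r(2) by (simp add: ip_commute)
    with F show "\<exists>k\<in>{1..d}. pdelta d e g \<delta> p \<sigma> k \<noteq> pdelta d e g \<delta> r \<tau> k"
      unfolding F_def ip_def by (metis (no_types, lifting) less_irrefl sum.cong)
  qed
qed

theorem corollary3:
  fixes d :: nat and \<epsilon> \<gamma> :: real and P :: "(nat \<Rightarrow> real) \<Rightarrow> (nat \<Rightarrow> real)"
  assumes "d \<ge> 2"
    and "0 < 4 * \<gamma>" and "4 * \<gamma> < \<epsilon>" and "\<epsilon> < 1 / 2"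
    and P: "\<And>\<sigma>. \<sigma> \<in> sign_vectors d \<Longrightarrow>
              P \<sigma> \<in> subS d \<inter> dual_gol d \<epsilon> \<gamma> \<and>
              ip d (P \<sigma>) (gol_vtx \<epsilon> \<gamma> \<sigma>) = 1 \<and>
              (\<forall>\<tau>\<in>sign_vectors d. \<tau> \<noteq> \<sigma> \<longrightarrow> ip d (P \<sigma>) (gol_vtx \<epsilon> \<gamma> \<tau>) < 1)"
  shows "(\<exists>\<delta>0>0. \<forall>\<delta>. 0 < \<delta> \<and> \<delta> < \<delta>0 \<longrightarrow>
            (\<forall>\<sigma>\<in>sign_vectors d. \<forall>\<tau>\<in>sign_vectors d.
               \<sigma> (d - 1) = 1 \<and> \<sigma> d = 1 \<and> \<tau> (d - 1) = 1 \<and> \<tau> d = 1 \<and> \<sigma> \<noteq> \<tau> \<longrightarrow>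
               (\<exists>k\<in>{1..d}. pdelta d \<epsilon> \<gamma> \<delta> (P \<sigma>) \<sigma> k \<noteq> pdelta d \<epsilon> \<gamma> \<delta> (P \<tau>) \<tau> k)))
       \<and> (\<forall>\<sigma>\<in>sign_vectors d. \<forall>\<tau>\<in>sign_vectors d.
               \<sigma> (d - 1) = 1 \<and> \<sigma> d = 1 \<and> \<tau> (d - 1) = 1 \<and> \<tau> d = 1 \<and> \<sigma> \<noteq> \<tau> \<longrightarrow>
               (\<exists>k\<in>{1..d}. qpt d \<epsilon> \<gamma> (P \<sigma>) \<sigma> k \<noteq> qpt d \<epsilon> \<gamma> (P \<tau>) \<tau> k))"
    (is "(\<exists>\<delta>0>0. \<forall>\<delta>. 0 < \<delta> \<and> \<delta> < \<delta>0 \<longrightarrow> ?pdelta_ne \<delta>) \<and> ?qpt_ne")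
proof -
  let ?S = "sign_vectors d"
  have d: "2 \<le> d" and e: "0 < \<epsilon>" "\<epsilon> < 1/2" and g: "0 < \<gamma>" "4 * \<gamma> < \<epsilon>"
    using assms by auto
  have v: "0 < gol_vtx \<epsilon> \<gamma> \<sigma> (d - 1)" if "\<sigma> \<in> ?S" "\<sigma> (d - 1) = 1" for \<sigma>
    using gol_vtx_pos[OF e g that(1)] that(2) d by simp
  have qpt: ?qpt_ne
    using qpt_ne[OF d v v] P by (metis (no_types, lifting))
  define T where "T = {(\<sigma>, \<tau>) \<in> ?S \<times> ?S. \<sigma> (d - 1) = 1 \<and> \<tau> (d - 1) = 1 \<and> \<sigma> \<noteq> \<tau>}"
  have ev: "eventually (\<lambda>\<delta>.
      \<exists>k\<in>{1..d}. pdelta d \<epsilon> \<gamma> \<delta> (P \<sigma>) \<sigma> k \<noteq> pdelta d \<epsilon> \<gamma> \<delta> (P \<tau>) \<tau> k) (at_right 0)"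
    if "(\<sigma>, \<tau>) \<in> T" for \<sigma> \<tau>
  proof -
    from that have \<sigma>: "\<sigma> \<in> ?S" "\<sigma> (d - 1) = 1" and \<tau>: "\<tau> \<in> ?S" "\<tau> (d - 1) = 1" and "\<sigma> \<noteq> \<tau>"
      by (auto simp: T_def)
    then show ?thesis
      using v[OF \<sigma>] v[OF \<tau>] P[OF \<sigma>(1)] P[OF \<tau>(1)] by (intro eventually_pdelta_ne[OF d]) auto
  qed
  have "finite T"
    using finite_sign_vectors unfolding T_def by (auto intro: finite_subset[of _ "?S \<times> ?S"])
  then have "eventually (\<lambda>\<delta>. \<forall>(\<sigma>, \<tau>)\<in>T.
      \<exists>k\<in>{1..d}. pdelta d \<epsilon> \<gamma> \<delta> (P \<sigma>) \<sigma> k \<noteq> pdelta d \<epsilon> \<gamma> \<delta> (P \<tau>) \<tau> k) (at_right 0)"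
    using ev by (intro eventually_ball_finite) auto
  then have "\<exists>\<delta>0>0. \<forall>\<delta>. 0 < \<delta> \<and> \<delta> < \<delta>0 \<longrightarrow> ?pdelta_ne \<delta>"
    unfolding eventually_at_right_field T_def by fastforce
  with qpt show ?thesis by blast
qed

end
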